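(* Let $f:X\to X$ be a continuous map of a compact metric space $(X,d)$ and let $\mu$ be an $f$-invariant ergodic Borel probability measure with positive metric entropy $h_\mu(f)>0$. Then for every $p\in X$ the stable class $W^s(p)=\{x\in X:\lim_{n\to\infty}d(f^n(x),f^n(p))=0\}$ satisfies $\mu(W^s(p))=0$.
   Context: A stable class of $f$ is a set of the form $W^s(p)$ for some $p\in X$. *)

theory Defs
  imports "HOL-Probability.Probability"
begin

definition invariant_measure :: "('a \<Rightarrow> 'a) \<Rightarrow> 'a measure \<Rightarrow> bool" where
  "invariant_measure f M \<longleftrightarrow> f \<in> measurable M M \<and>
     (\<forall>A \<in> sets M. emeasure M (f -` A \<inter> space M) = emeasure M A)"

definition ergodic_measure :: "('a \<Rightarrow> 'a) \<Rightarrow> 'a measure \<Rightarrow> bool" where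
  "ergodic_measure f M \<longleftrightarrow> invariant_measure f M \<and>
     (\<forall>A \<in> sets M. f -` A \<inter> space M = A \<longrightarrow> measure M A = 0 \<or> measure M A = 1)"

definition finite_meas_partition :: "'a measure \<Rightarrow> 'a set set \<Rightarrow> bool" where
  "finite_meas_partition M P \<longleftrightarrow> finite P \<and> P \<subseteq> sets M \<and> \<Union>P = space M \<and>
     (\<forall>A\<in>P. \<forall>B\<in>P. A \<noteq> B \<longrightarrow> A \<inter> B = {})"

text \<open>Shannon entropy of a finite partition, H(P) = - sum mu(A) log mu(A)
  (with 0 log 0 = 0, which holds since ln 0 = 0 in Isabelle).\<close>
definition part_entropy :: "'a measure \<Rightarrow> 'a set set \<Rightarrow> real" where
  "part_entropy M P = - (\<Sum>A\<in>P. measure M A * ln (measure M A))"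

definition iter_join :: "'a measure \<Rightarrow> ('a \<Rightarrow> 'a) \<Rightarrow> 'a set set \<Rightarrow> nat \<Rightarrow> 'a set set" where
  "iter_join M f P n =
     {space M \<inter> (\<Inter>i<n. (f ^^ i) -` (c i)) | c. \<forall>i<n. c i \<in> P}"

definition entropy_part :: "'a measure \<Rightarrow> ('a \<Rightarrow> 'a) \<Rightarrow> 'a set set \<Rightarrow> real" where
  "entropy_part M f P = lim (\<lambda>n. part_entropy M (iter_join M f P n) / real n)"

definition metric_entropy :: "'a measure \<Rightarrow> ('a \<Rightarrow> 'a) \<Rightarrow> ereal" where
  "metric_entropy M f = (SUP P \<in> {P. finite_meas_partition M P}. ereal (entropy_part M f P))"

definition stable_set :: "'a::metric_space set \<Rightarrow> ('a \<Rightarrow> 'a) \<Rightarrow> 'a \<Rightarrow> 'a set" where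
  "stable_set X f p = {x \<in> X. (\<lambda>n. dist ((f ^^ n) x) ((f ^^ n) p)) \<longlonglongrightarrow> 0}"

end

(*
  Suppose the stable class W^s(p) had positive measure. The set of points whose orbit is
  eventually asymptotic to some time shift of the orbit of p is invariant and contains W^s(p),
  so by ergodicity it has full measure; by continuity of measure, most points shadow the orbit
  of p up to distance delta from some fixed time N on, after delays bounded by N.

  Given a finite partition P, shrink its cells to closed cores that are 2 delta apart and cover
  most of the space. A point shadowing p that sits in a core at time i lies in the cell of the
  core nearest to f^(i-k+m)(p), so its P-itinerary is determined by p and the delays k, m,
  except at the first 2N times and at the (by Markov's inequality, rare) times spent outside
  the cores. Hence the good points meet only subexponentially many cells of the n-th join,
  which forces h(f, P) = 0 for every P, contradicting positive entropy.
*)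

theory Submission
  imports Defs "HOL-Real_Asymp.Real_Asymp"
begin

section \<open>Entropy of finite partitions\<close>

lemma ln_of_nat_nonneg: "0 \<le> ln (real n)"
  by (cases "n = 0") auto

lemma ln_of_nat_mono: "m \<le> n \<Longrightarrow> ln (real m) \<le> ln (real n)"
  by (cases "m = 0") (simp_all add: ln_of_nat_nonneg)

lemma neg_mult_ln_add_le:
  fixes a b :: real
  assumes "a \<ge> 0" "b \<ge> 0"
  shows "-((a + b) * ln (a + b)) \<le> -(a * ln a) - b * ln b"
proof (cases "a = 0 \<or> b = 0")
  case False
  then have "a > 0" "b > 0" using assms by auto
  then have "a * ln a \<le> a * ln (a + b)" "b * ln b \<le> b * ln (a + b)"
    by (auto intro: mult_left_mono)
  then show ?thesis by (simp add: algebra_simps)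
qed auto

lemma neg_mult_ln_le_one:
  fixes s :: real
  assumes "s \<ge> 0"
  shows "-(s * ln s) \<le> 1"
proof (cases "s = 0")
  case False
  then have s: "s > 0" using assms by auto
  have "ln (1 / s) \<le> 1 / s - 1" using s by (intro ln_le_minus_one) auto
  then have "s * (- ln s) \<le> s * (1 / s - 1)" using s by (intro mult_left_mono) (auto simp: ln_div)
  then show ?thesis using s by (simp add: algebra_simps)
qed simp

lemma sum_neg_mult_ln_le:
  fixes a :: "'i \<Rightarrow> real"
  assumes I: "finite I" and nonneg: "\<And>i. i \<in> I \<Longrightarrow> a i \<ge> 0"
  shows "(\<Sum>i\<in>I. -(a i * ln (a i))) \<le> (\<Sum>i\<in>I. a i) * ln (card I) + 1"
proof -
  define S where "S = (\<Sum>i\<in>I. a i)"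
  have "S \<ge> 0" unfolding S_def using nonneg by (simp add: sum_nonneg)
  show ?thesis
  proof (cases "S = 0")
    case True
    then have "\<forall>i\<in>I. a i = 0" using sum_nonneg_eq_0_iff[OF I] nonneg unfolding S_def by blast
    then show ?thesis by simp
  next
    case False
    then have S: "S > 0" using \<open>S \<ge> 0\<close> by auto
    then have "I \<noteq> {}" unfolding S_def by auto
    then have N: "real (card I) > 0" using I by (simp add: card_gt_0_iff)
    \<comment> \<open>\<open>ln t \<le> t - 1\<close> at \<open>t = S / (card I * a i)\<close>\<close>
    have bound: "-(a i * ln (a i)) \<le> a i * ln (card I) - a i * ln S + S / card I - a i"
      if "i \<in> I" for i
    proof (cases "a i = 0")
      case False
      then have ai: "a i > 0" using nonneg[OF that] by auto
      have "ln (S / (card I * a i)) \<le> S / (card I * a i) - 1"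
        using ai S N by (intro ln_le_minus_one) auto
      also have "ln (S / (card I * a i)) = ln S - ln (card I) - ln (a i)"
        using ai S N by (simp add: ln_div ln_mult)
      finally have "a i * (ln S - ln (card I) - ln (a i)) \<le> a i * (S / (card I * a i) - 1)"
        using ai by (intro mult_left_mono) auto
      also have "\<dots> = S / card I - a i"
        using ai N by (simp add: field_simps)
      finally show ?thesis by (simp add: algebra_simps)
    qed (use S N in simp)
    have "(\<Sum>i\<in>I. -(a i * ln (a i))) \<le> (\<Sum>i\<in>I. a i * ln (card I) - a i * ln S + S / card I - a i)"
      by (intro sum_mono bound)
    also have "\<dots> = S * ln (card I) - S * ln S"
      unfolding S_def using N by (simp add: sum_subtractf sum_distrib_right[symmetric] sum.distrib)
    also have "\<dots> \<le> S * ln (card I) + 1" using neg_mult_ln_le_one[OF \<open>S \<ge> 0\<close>] by simp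
    finally show ?thesis unfolding S_def .
  qed
qed

lemma (in prob_space) part_entropy_nonneg: "part_entropy M P \<ge> 0"
proof -
  have "measure M A * ln (measure M A) \<le> 0" for A
  proof (cases "measure M A = 0")
    case False
    then have "ln (measure M A) \<le> 0" by (simp add: zero_less_measure_iff)
    then show ?thesis by (simp add: mult_nonneg_nonpos)
  qed simp
  then show ?thesis unfolding part_entropy_def by (simp add: sum_nonpos)
qed

lemma (in prob_space) part_entropy_le_ln_card_meeting:
  assumes R: "finite R" "R \<subseteq> sets M"
    and disj: "\<And>A B. A \<in> R \<Longrightarrow> B \<in> R \<Longrightarrow> A \<noteq> B \<Longrightarrow> A \<inter> B = {}"
    and G: "G \<in> sets M"
  shows "part_entropy M R \<le>
    ln (card {A\<in>R. A \<inter> G \<noteq> {}}) + measure M (space M - G) * ln (card R) + 2"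
proof -
  let ?RG = "{A\<in>R. A \<inter> G \<noteq> {}}"
  let ?H = "\<lambda>A. -(measure M A * ln (measure M A))"
  have meas: "A \<in> sets M" if "A \<in> R" for A using R that by auto
  have disj_restr: "disjoint_family_on (\<lambda>A. A \<inter> E) S" if "S \<subseteq> R" for E S
    using disj that unfolding disjoint_family_on_def by blast
  have "part_entropy M R = (\<Sum>A\<in>R. ?H A)"
    unfolding part_entropy_def by (simp add: sum_negf)
  also have "\<dots> \<le> (\<Sum>A\<in>R. ?H (A \<inter> G)) + (\<Sum>A\<in>R. ?H (A - G))"
  proof (unfold sum.distrib[symmetric], intro sum_mono)
    fix A assume "A \<in> R"
    then have "measure M A = measure M (A \<inter> G) + measure M (A - G)"
      using G meas[OF \<open>A \<in> R\<close>] by (subst finite_measure_Union[symmetric]) (auto intro: arg_cong[where f="measure M"])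
    then show "?H A \<le> ?H (A \<inter> G) + ?H (A - G)" by (simp add: neg_mult_ln_add_le)
  qed
  also have "(\<Sum>A\<in>R. ?H (A \<inter> G)) = (\<Sum>A\<in>?RG. ?H (A \<inter> G))"
    using R by (intro sum.mono_neutral_right) auto
  also have "\<dots> \<le> (\<Sum>A\<in>?RG. measure M (A \<inter> G)) * ln (card ?RG) + 1"
    using R by (intro sum_neg_mult_ln_le) auto
  also have "(\<Sum>A\<in>?RG. measure M (A \<inter> G)) = measure M (\<Union>A\<in>?RG. A \<inter> G)"
    using R meas G by (intro finite_measure_finite_Union[symmetric] disj_restr) auto
  also have "measure M (\<Union>A\<in>?RG. A \<inter> G) * ln (card ?RG) \<le> ln (card ?RG)"
    by (intro mult_left_le_one_le ln_of_nat_nonneg) auto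
  also have "(\<Sum>A\<in>R. ?H (A - G)) \<le> (\<Sum>A\<in>R. measure M (A - G)) * ln (card R) + 1"
    using R by (intro sum_neg_mult_ln_le) auto
  also have "(\<Sum>A\<in>R. measure M (A - G)) = (\<Sum>A\<in>R. measure M (A \<inter> (space M - G)))"
    using meas sets.sets_into_space by (intro sum.cong refl arg_cong[where f="measure M"]) blast
  also have "\<dots> = measure M (\<Union>A\<in>R. A \<inter> (space M - G))"
    using R meas G by (intro finite_measure_finite_Union[symmetric] disj_restr) auto
  also have "measure M (\<Union>A\<in>R. A \<inter> (space M - G)) * ln (card R) \<le> measure M (space M - G) * ln (card R)"
    using R G sets.sets_into_space by (intro mult_right_mono finite_measure_mono ln_of_nat_nonneg) auto
  finally show ?thesis by simp
qed

section \<open>Counting itineraries\<close>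

lemma sum_power_card_Pow:
  fixes x :: "'a::comm_semiring_1"
  assumes "finite S"
  shows "(\<Sum>B\<in>Pow S. x ^ card B) = (1 + x) ^ card S"
  using assms
proof (induction S rule: finite_induct)
  case (insert a S)
  have "inj_on (insert a) (Pow S)" and "Pow S \<inter> insert a ` Pow S = {}"
    using insert by (auto simp: inj_on_def)
  then have "(\<Sum>B\<in>Pow (insert a S). x ^ card B) =
      (\<Sum>B\<in>Pow S. x ^ card B) + (\<Sum>B\<in>Pow S. x ^ card (insert a B))"
    using insert by (simp add: Pow_insert sum.union_disjoint sum.reindex)
  also have "(\<Sum>B\<in>Pow S. x ^ card (insert a B)) = x * (\<Sum>B\<in>Pow S. x ^ card B)"
    unfolding sum_distrib_left
  proof (intro sum.cong refl)
    fix B assume "B \<in> Pow S"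
    then have "a \<notin> B" "finite B" using insert by (auto intro: finite_subset)
    then show "x ^ card (insert a B) = x * x ^ card B" by simp
  qed
  finally show ?case using insert by (simp add: algebra_simps)
qed simp

text \<open>Each such subset \<open>B\<close> contributes at least \<open>1\<close> to
  \<open>\<Sum>B. \<eta>^(card B - \<eta>T) = (1 + \<eta>)^T \<eta>^(-\<eta>T)\<close>.\<close>
lemma ln_card_small_subsets_le:
  fixes \<eta> :: real and T :: nat
  assumes "0 < \<eta>" "\<eta> \<le> 1"
  shows "ln (card {B. B \<subseteq> {..<T} \<and> card B \<le> \<eta> * T}) \<le> T * \<eta> + \<eta> * T * ln (1 / \<eta>)"
proof -
  let ?Bs = "{B. B \<subseteq> {..<T} \<and> card B \<le> \<eta> * T}"
  have pos: "\<eta> powr (\<eta> * T) > 0" using assms by simp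
  have "0 \<le> \<eta> * T" using assms by (intro mult_nonneg_nonneg) auto
  then have "{} \<in> ?Bs" by simp
  moreover have "finite ?Bs" by (rule finite_subset[of _ "Pow {..<T}"]) auto
  ultimately have card_pos: "card ?Bs > 0" by (auto simp: card_gt_0_iff)
  have "real (card ?Bs) = (\<Sum>B\<in>?Bs. 1)" by simp
  also have "\<dots> \<le> (\<Sum>B\<in>?Bs. \<eta> ^ card B / \<eta> powr (\<eta> * T))"
  proof (intro sum_mono)
    fix B assume "B \<in> ?Bs"
    then have "\<eta> powr (\<eta> * T) \<le> \<eta> powr (card B)"
      using assms \<open>0 \<le> \<eta> * T\<close> by (intro powr_mono') simp_all
    then show "1 \<le> \<eta> ^ card B / \<eta> powr (\<eta> * T)"
      using assms pos by (simp add: powr_realpow)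
  qed
  also have "\<dots> \<le> (\<Sum>B\<in>Pow {..<T}. \<eta> ^ card B / \<eta> powr (\<eta> * T))"
    using assms by (intro sum_mono2) auto
  also have "\<dots> = (1 + \<eta>) ^ T / \<eta> powr (\<eta> * T)"
    by (simp add: sum_divide_distrib[symmetric] sum_power_card_Pow)
  finally have "ln (card ?Bs) \<le> ln ((1 + \<eta>) ^ T / \<eta> powr (\<eta> * T))"
    using card_pos by simp
  also have "\<dots> = T * ln (1 + \<eta>) + \<eta> * T * ln (1 / \<eta>)"
    using assms by (simp add: ln_div ln_realpow ln_powr)
  also have "\<dots> \<le> T * \<eta> + \<eta> * T * ln (1 / \<eta>)"
    using ln_add_one_self_le_self[of \<eta>] assms by (simp add: mult_left_mono)
  finally show ?thesis .
qed

lemma exists_small_eta: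
  fixes \<epsilon> c :: real
  assumes "\<epsilon> > 0"
  obtains \<eta> where "0 < \<eta>" "\<eta> \<le> 1" "\<eta> * (1 + ln (1 / \<eta>) + c) < \<epsilon>"
proof -
  have "((\<lambda>\<eta>. \<eta> * (1 + ln (1 / \<eta>) + c)) \<longlongrightarrow> 0) (at_right 0)"
    by real_asymp
  then have "eventually (\<lambda>\<eta>. \<eta> * (1 + ln (1 / \<eta>) + c) < \<epsilon>) (at_right 0)"
    using assms by (intro order_tendstoD)
  then obtain b :: real where "b > 0" and b: "\<And>\<eta>. 0 < \<eta> \<Longrightarrow> \<eta> < b \<Longrightarrow> \<eta> * (1 + ln (1 / \<eta>) + c) < \<epsilon>"
    unfolding eventually_at_right_field by auto
  show ?thesis
    using \<open>b > 0\<close> by (intro that[of "min (b / 2) 1"] b) auto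
qed

lemma card_patterns_le:
  fixes name :: "'x \<Rightarrow> nat \<Rightarrow> 'b" and s :: "'j \<Rightarrow> nat \<Rightarrow> 'b" and \<eta> :: real and T L :: nat
  assumes P: "finite P" "P \<noteq> {}" and J: "finite J"
    and pattern: "\<And>x. x \<in> G \<Longrightarrow> name x \<in> {..<T} \<rightarrow>\<^sub>E P \<and> (\<exists>j\<in>J. \<exists>B. B \<subseteq> {..<T} \<and> card B \<le> \<eta> * T \<and>
      (\<forall>i<T. L \<le> i \<and> i \<notin> B \<longrightarrow> name x i = s j i))"
  shows "card (name ` G) \<le> card J * card {B. B \<subseteq> {..<T} \<and> card B \<le> \<eta> * T} * card P ^ (L + nat \<lfloor>\<eta> * T\<rfloor>)"
proof -
  define Bs where "Bs = {B. B \<subseteq> {..<T} \<and> card B \<le> \<eta> * T}"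
  define H where "H = (\<lambda>(j, B). {h \<in> {..<T} \<rightarrow>\<^sub>E P. \<forall>i<T. L \<le> i \<and> i \<notin> B \<longrightarrow> h i = s j i})"
  have finite_Bs: "finite Bs" unfolding Bs_def by (rule finite_subset[of _ "Pow {..<T}"]) auto
  have H_sub: "H jB \<subseteq> {..<T} \<rightarrow>\<^sub>E P" for jB by (auto simp: H_def split: prod.splits)
  have "name ` G \<subseteq> (\<Union>jB\<in>J \<times> Bs. H jB)"
  proof
    fix y assume "y \<in> name ` G"
    then obtain x where "x \<in> G" "y = name x" by blast
    with pattern obtain j B where "j \<in> J" "B \<subseteq> {..<T}" "card B \<le> \<eta> * T"
      "\<forall>i<T. L \<le> i \<and> i \<notin> B \<longrightarrow> y i = s j i" "y \<in> {..<T} \<rightarrow>\<^sub>E P" by metis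
    then have "y \<in> H (j, B)" "(j, B) \<in> J \<times> Bs" unfolding H_def Bs_def by auto
    then show "y \<in> (\<Union>jB\<in>J \<times> Bs. H jB)" by blast
  qed
  \<comment> \<open>an element of \<open>H (j, B)\<close> is determined by its values on \<open>{..<L} \<union> B\<close>\<close>
  moreover have card_H: "card (H (j, B)) \<le> card P ^ (L + nat \<lfloor>\<eta> * T\<rfloor>)" if "B \<in> Bs" for j B
  proof -
    define S where "S = {i\<in>{..<T}. i < L \<or> i \<in> B}"
    have "inj_on (\<lambda>h. restrict h S) (H (j, B))"
    proof (rule inj_onI, rule ext)
      fix h h' i assume h: "h \<in> H (j, B)" and h': "h' \<in> H (j, B)" and eq: "restrict h S = restrict h' S"
      consider "i \<in> S" | "i < T" "L \<le> i" "i \<notin> B" | "\<not> i < T" unfolding S_def by fastforce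
      then show "h i = h' i"
      proof cases
        case 1
        then show ?thesis using fun_cong[OF eq, of i] by simp
      next
        case 2
        then show ?thesis using h h' by (simp add: H_def)
      next
        case 3
        then show ?thesis using h h' H_sub by (metis PiE_arb lessThan_iff subsetD)
      qed
    qed
    then have "card (H (j, B)) = card ((\<lambda>h. restrict h S) ` H (j, B))" by (simp add: card_image)
    also have "\<dots> \<le> card (S \<rightarrow>\<^sub>E P)"
    proof (rule card_mono)
      show "finite (S \<rightarrow>\<^sub>E P)" using P by (simp add: finite_PiE S_def)
      show "(\<lambda>h. restrict h S) ` H (j, B) \<subseteq> S \<rightarrow>\<^sub>E P"
      proof
        fix g assume "g \<in> (\<lambda>h. restrict h S) ` H (j, B)"
        then obtain h where "h \<in> {..<T} \<rightarrow>\<^sub>E P" "g = restrict h S" using H_sub by blast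
        then show "g \<in> S \<rightarrow>\<^sub>E P" unfolding S_def by auto
      qed
    qed
    also have "\<dots> = card P ^ card S" by (simp add: card_PiE S_def)
    also have "\<dots> \<le> card P ^ (L + nat \<lfloor>\<eta> * T\<rfloor>)"
    proof (intro power_increasing)
      have "finite B" using that unfolding Bs_def by (auto intro: finite_subset)
      then have "card S \<le> card ({..<L} \<union> B)" unfolding S_def by (intro card_mono) auto
      also have "\<dots> \<le> L + card B" using card_Un_le[of "{..<L}" B] by simp
      also have "card B \<le> nat \<lfloor>\<eta> * T\<rfloor>" using that unfolding Bs_def by (intro le_nat_floor) auto
      finally show "card S \<le> L + nat \<lfloor>\<eta> * T\<rfloor>" by simp
      show "1 \<le> card P" using P by (simp add: Suc_le_eq card_gt_0_iff)
    qed
    finally show ?thesis .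
  qed
  moreover have "finite (H jB)" for jB
    using H_sub by (rule finite_subset) (simp add: finite_PiE P)
  ultimately have "card (name ` G) \<le> card (\<Union>jB\<in>J \<times> Bs. H jB)"
    using J finite_Bs by (intro card_mono) auto
  also have "\<dots> \<le> (\<Sum>jB\<in>J \<times> Bs. card (H jB))"
    using J finite_Bs by (intro card_UN_le) auto
  also have "\<dots> \<le> card (J \<times> Bs) * card P ^ (L + nat \<lfloor>\<eta> * T\<rfloor>)"
  proof -
    have "card (H jB) \<le> card P ^ (L + nat \<lfloor>\<eta> * T\<rfloor>)" if "jB \<in> J \<times> Bs" for jB
      using that card_H by (cases jB) auto
    then show ?thesis using sum_bounded_above[of "J \<times> Bs" "\<lambda>jB. card (H jB)"] by simp
  qed
  finally show ?thesis by (simp add: Bs_def card_cartesian_product)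
qed

lemma ln_card_patterns_le:
  fixes name :: "'x \<Rightarrow> nat \<Rightarrow> 'b" and s :: "'j \<Rightarrow> nat \<Rightarrow> 'b" and \<eta> :: real and T L :: nat
  assumes P: "finite P" "P \<noteq> {}" and J: "finite J" "J \<noteq> {}" and \<eta>: "0 < \<eta>" "\<eta> \<le> 1"
    and pattern: "\<And>x. x \<in> G \<Longrightarrow> name x \<in> {..<T} \<rightarrow>\<^sub>E P \<and> (\<exists>j\<in>J. \<exists>B. B \<subseteq> {..<T} \<and> card B \<le> \<eta> * T \<and>
      (\<forall>i<T. L \<le> i \<and> i \<notin> B \<longrightarrow> name x i = s j i))"
  shows "ln (card (name ` G)) \<le> ln (card J) + T * \<eta> + \<eta> * T * ln (1 / \<eta>) + (L + \<eta> * T) * ln (card P)"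
proof -
  define Bs where "Bs = {B. B \<subseteq> {..<T} \<and> card B \<le> \<eta> * T}"
  have "{} \<in> Bs" "finite Bs"
    using \<eta> by (auto simp: Bs_def intro: finite_subset[of _ "Pow {..<T}"])
  then have pos: "card J > 0" "card Bs > 0" "card P > 0"
    using J P by (auto simp: card_gt_0_iff)
  have nonneg: "0 \<le> T * \<eta>" "0 \<le> \<eta> * T * ln (1 / \<eta>)" "0 \<le> (L + \<eta> * T) * ln (card P)"
    using \<eta> pos by auto
  show ?thesis
  proof (cases "card (name ` G) = 0")
    case True
    then show ?thesis using nonneg ln_of_nat_nonneg[of "card J"] by simp
  next
    case False
    have "card (name ` G) \<le> card J * card Bs * card P ^ (L + nat \<lfloor>\<eta> * T\<rfloor>)"
      unfolding Bs_def by (rule card_patterns_le[OF P J(1) pattern])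
    then have "real (card (name ` G)) \<le> real (card J) * real (card Bs) * real (card P) ^ (L + nat \<lfloor>\<eta> * T\<rfloor>)"
      by (metis of_nat_le_iff of_nat_mult of_nat_power)
    then have "ln (card (name ` G)) \<le> ln (real (card J) * real (card Bs) * real (card P) ^ (L + nat \<lfloor>\<eta> * T\<rfloor>))"
      using False pos by (subst ln_le_cancel_iff) auto
    also have "\<dots> = ln (card J) + ln (card Bs) + (L + nat \<lfloor>\<eta> * T\<rfloor>) * ln (card P)"
      using pos by (simp add: ln_mult ln_realpow)
    also have "ln (card Bs) \<le> T * \<eta> + \<eta> * T * ln (1 / \<eta>)"
      unfolding Bs_def using \<eta> by (rule ln_card_small_subsets_le)
    also have "(L + nat \<lfloor>\<eta> * T\<rfloor>) * ln (card P) \<le> (L + \<eta> * T) * ln (card P)"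
      using \<eta> pos by (intro mult_right_mono) auto
    finally show ?thesis by simp
  qed
qed

section \<open>Separated cores\<close>

lemma compact_closed_separated:
  fixes S T :: "'a::metric_space set"
  assumes "compact S" "closed T" "S \<inter> T = {}"
  obtains d where "d > 0" "\<And>x y. x \<in> S \<Longrightarrow> y \<in> T \<Longrightarrow> d \<le> dist x y"
proof (cases "S = {} \<or> T = {}")
  case True
  then show ?thesis using that[of 1] by auto
next
  case False
  have "continuous_on S (\<lambda>x. infdist x T)" by (intro continuous_intros)
  then obtain x0 where x0: "x0 \<in> S" "\<And>x. x \<in> S \<Longrightarrow> infdist x0 T \<le> infdist x T"
    using continuous_attains_inf[OF assms(1)] False by blast
  have "infdist x0 T > 0"
    using x0 assms False by (intro infdist_pos_not_in_closed) auto
  moreover have "infdist x0 T \<le> dist x y" if "x \<in> S" "y \<in> T" for x y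
    using x0(2)[OF that(1)] infdist_le[OF that(2), of x] by linarith
  ultimately show ?thesis by (rule that)
qed

lemma separated_cores_nearest_eq:
  fixes K :: "'b \<Rightarrow> 'a::metric_space set"
  assumes sep: "\<And>A B z w. A \<in> P \<Longrightarrow> B \<in> P \<Longrightarrow> A \<noteq> B \<Longrightarrow> z \<in> K A \<Longrightarrow> w \<in> K B \<Longrightarrow> 2 * \<delta> \<le> dist z w"
    and A: "A \<in> P" "z \<in> K A" "dist z y < \<delta>"
  shows "(SOME A. A \<in> P \<and> (\<exists>z\<in>K A. dist z y < \<delta>)) = A"
proof (rule some_equality)
  show "A \<in> P \<and> (\<exists>z\<in>K A. dist z y < \<delta>)" using A by blast
next
  fix B assume "B \<in> P \<and> (\<exists>w\<in>K B. dist w y < \<delta>)"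
  then obtain w where w: "B \<in> P" "w \<in> K B" "dist w y < \<delta>" by blast
  show "B = A"
  proof (rule ccontr)
    assume "B \<noteq> A"
    then have "2 * \<delta> \<le> dist z w" using sep[of A B z w] A w by auto
    moreover have "dist z w \<le> dist z y + dist w y" by (rule dist_triangle2)
    ultimately show False using A w by linarith
  qed
qed

section \<open>Inner regularity by closed sets\<close>

definition closed_inner_approx :: "'a::topological_space measure \<Rightarrow> 'a set \<Rightarrow> bool" where
  "closed_inner_approx M A \<longleftrightarrow> (\<forall>e>0. \<exists>F\<in>sets M. closed F \<and> F \<subseteq> A \<and> measure M (A - F) < e)"

lemma closed_inner_approx_closed:
  fixes M :: "'a::topological_space measure"
  shows "F \<in> sets M \<Longrightarrow> closed F \<Longrightarrow> closed_inner_approx M F"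
  unfolding closed_inner_approx_def by auto

lemma closed_inner_approx_UN:
  fixes M :: "'a::topological_space measure" and A :: "nat \<Rightarrow> 'a set"
  assumes "finite_measure M"
    and A: "\<And>i. A i \<in> sets M" and approx: "\<And>i. closed_inner_approx M (A i)"
  shows "closed_inner_approx M (\<Union>i. A i)"
  unfolding closed_inner_approx_def
proof (intro allI impI)
  interpret finite_measure M by fact
  fix e :: real assume e: "e > 0"
  define S where "S k = (\<Union>i<k. A i)" for k
  have S: "S k \<in> sets M" for k unfolding S_def using A by auto
  have "incseq S" unfolding incseq_def S_def by (intro allI impI UN_mono) auto
  then have "(\<lambda>k. measure M (S k)) \<longlonglongrightarrow> measure M (\<Union>k. S k)"
    using S by (intro finite_Lim_measure_incseq) auto
  moreover have "(\<Union>k. S k) = (\<Union>i. A i)" unfolding S_def by auto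
  ultimately have "eventually (\<lambda>k. measure M (S k) > measure M (\<Union>i. A i) - e / 2) sequentially"
    using e by (auto intro: order_tendstoD)
  then obtain k where k: "measure M (S k) > measure M (\<Union>i. A i) - e / 2"
    by (auto simp: eventually_sequentially)
  have "\<forall>i. \<exists>F. F \<in> sets M \<and> closed F \<and> F \<subseteq> A i \<and> measure M (A i - F) < e / (2 * (k + 1))"
    using approx e unfolding closed_inner_approx_def by (simp add: Bex_def)
  then obtain F where F: "\<And>i. F i \<in> sets M" "\<And>i. closed (F i)" "\<And>i. F i \<subseteq> A i"
    "\<And>i. measure M (A i - F i) < e / (2 * (k + 1))"
    by metis
  have "measure M ((\<Union>i. A i) - (\<Union>i<k. F i)) \<le> measure M (((\<Union>i. A i) - S k) \<union> (\<Union>i<k. A i - F i))"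
    using A F S by (intro finite_measure_mono) (auto simp: S_def)
  also have "\<dots> \<le> measure M ((\<Union>i. A i) - S k) + (\<Sum>i<k. measure M (A i - F i))"
    using A F S by (intro measure_Un_le[THEN order_trans] add_left_mono finite_measure_subadditive_finite) auto
  also have "\<dots> \<le> measure M ((\<Union>i. A i) - S k) + k * (e / (2 * (k + 1)))"
    using sum_mono[of "{..<k}" "\<lambda>i. measure M (A i - F i)" "\<lambda>_. e / (2 * (k + 1))"] F(4)
    by (auto simp: less_imp_le)
  also have "\<dots> < e"
  proof -
    have "measure M ((\<Union>i. A i) - S k) = measure M (\<Union>i. A i) - measure M (S k)"
      using A S by (intro finite_measure_Diff) (auto simp: S_def)
    moreover have "k * (e / (2 * (k + 1))) < e / 2" using e by (simp add: field_simps)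
    ultimately show ?thesis using k by linarith
  qed
  finally have "measure M ((\<Union>i. A i) - (\<Union>i<k. F i)) < e" .
  moreover have "(\<Union>i<k. F i) \<in> sets M" using F(1) by (intro sets.finite_UN) auto
  moreover have "closed (\<Union>i<k. F i)" using F(2) by (intro closed_UN) auto
  moreover have "(\<Union>i<k. F i) \<subseteq> (\<Union>i. A i)" using F(3) by blast
  ultimately show "\<exists>F\<in>sets M. closed F \<and> F \<subseteq> (\<Union>i. A i) \<and> measure M ((\<Union>i. A i) - F) < e"
    by blast
qed

lemma closed_inner_approx_INT:
  fixes M :: "'a::topological_space measure" and A :: "nat \<Rightarrow> 'a set"
  assumes "finite_measure M"
    and A: "\<And>i. A i \<in> sets M" and approx: "\<And>i. closed_inner_approx M (A i)"
  shows "closed_inner_approx M (\<Inter>i. A i)"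
  unfolding closed_inner_approx_def
proof (intro allI impI)
  interpret finite_measure M by fact
  fix e :: real assume e: "e > 0"
  have geometric: "(\<lambda>i. e / 2 * (1 / 2) ^ Suc i) sums (e / 2)"
    using sums_mult[OF power_half_series, of "e / 2"] by simp
  have "e / 2 * (1 / 2) ^ Suc i > 0" for i using e by simp
  then have "\<forall>i. \<exists>F. F \<in> sets M \<and> closed F \<and> F \<subseteq> A i \<and> measure M (A i - F) < e / 2 * (1 / 2) ^ Suc i"
    using approx unfolding closed_inner_approx_def Bex_def by blast
  then obtain F where F: "\<And>i. F i \<in> sets M" "\<And>i. closed (F i)" "\<And>i. F i \<subseteq> A i"
    "\<And>i. measure M (A i - F i) < e / 2 * (1 / 2) ^ Suc i"
    by metis
  have summable: "summable (\<lambda>i. measure M (A i - F i))"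
    using F(4) by (intro summable_comparison_test[OF _ sums_summable[OF geometric]]) (auto intro: less_imp_le)
  have "measure M ((\<Inter>i. A i) - (\<Inter>i. F i)) \<le> measure M (\<Union>i. A i - F i)"
    using A F by (intro finite_measure_mono) auto
  also have "\<dots> \<le> (\<Sum>i. measure M (A i - F i))"
    using A F summable by (intro finite_measure_subadditive_countably) auto
  also have "\<dots> \<le> (\<Sum>i. e / 2 * (1 / 2) ^ Suc i)"
    using F(4) summable sums_summable[OF geometric] by (intro suminf_le less_imp_le) auto
  also have "\<dots> < e" using geometric e by (simp add: sums_iff)
  finally have "measure M ((\<Inter>i. A i) - (\<Inter>i. F i)) < e" .
  moreover have "(\<Inter>i. F i) \<in> sets M" using F(1) by (intro sets.countable_INT') auto
  moreover have "closed (\<Inter>i. F i)" using F(2) by (intro closed_INT) auto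
  moreover have "(\<Inter>i. F i) \<subseteq> (\<Inter>i. A i)" using F(3) by blast
  ultimately show "\<exists>F\<in>sets M. closed F \<and> F \<subseteq> (\<Inter>i. A i) \<and> measure M ((\<Inter>i. A i) - F) < e"
    by blast
qed

lemma closed_inner_approx_Int_open:
  fixes M :: "'a::metric_space measure"
  assumes "finite_measure M"
    and sets: "sets M = sets (restrict_space borel X)" and "closed X" "open U"
  shows "closed_inner_approx M (X \<inter> U)"
proof (cases "U = UNIV")
  case True
  have "X \<in> sets M" using sets by (auto simp: sets_restrict_space image_iff intro!: bexI[of _ UNIV])
  then show ?thesis using True \<open>closed X\<close> by (simp add: closed_inner_approx_closed)
next
  case False
  define F where "F n = X \<inter> {x. inverse (Suc n) \<le> infdist x (- U)}" for n
  have closed: "closed (F n)" for n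
    unfolding F_def using \<open>closed X\<close> by (intro closed_Int closed_Collect_le continuous_intros)
  then have "F n \<in> sets M" for n
    using sets by (auto simp: sets_restrict_space image_iff F_def intro!: bexI[of _ "F n"])
  moreover have "(\<Union>n. F n) = X \<inter> U"
  proof (intro equalityI subsetI)
    fix x assume "x \<in> (\<Union>n. F n)"
    then obtain n where x: "x \<in> X" "inverse (Suc n) \<le> infdist x (- U)" by (auto simp: F_def)
    then have "infdist x (- U) > 0" by (auto intro: less_le_trans[OF _ x(2)])
    then show "x \<in> X \<inter> U" using x by (metis ComplI IntI infdist_zero less_irrefl)
  next
    fix x assume x: "x \<in> X \<inter> U"
    then have "infdist x (- U) > 0" using False \<open>open U\<close> by (intro infdist_pos_not_in_closed) auto
    then obtain n where "inverse (Suc n) < infdist x (- U)" using reals_Archimedean by blast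
    then show "x \<in> (\<Union>n. F n)" using x unfolding F_def by (auto intro!: exI[of _ n])
  qed
  ultimately show ?thesis
    using closed_inner_approx_UN[OF \<open>finite_measure M\<close>, of F] closed by (simp add: closed_inner_approx_closed)
qed

lemma closed_inner_approx_restrict_borel:
  fixes M :: "'a::metric_space measure"
  assumes "finite_measure M"
    and sets: "sets M = sets (restrict_space borel X)" and "closed X" and "A \<in> sets M"
  shows "closed_inner_approx M A"
proof -
  have in_sets: "X \<inter> B \<in> sets M" if "B \<in> sets borel" for B
    using sets that by (auto simp: sets_restrict_space)
  have "closed_inner_approx M (X \<inter> B) \<and> closed_inner_approx M (X - B)"
    if "B \<in> sigma_sets UNIV (Collect open)" for B
    using that
  proof (induction rule: sigma_sets.induct)
    case (Basic U)
    have "X - U = X \<inter> - U" by auto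
    then show ?case using Basic \<open>closed X\<close> in_sets[of "- U"]
      by (auto simp: closed_inner_approx_Int_open[OF \<open>finite_measure M\<close> sets]
          intro!: closed_inner_approx_closed closed_Int)
  next
    case Empty
    then show ?case using in_sets[of UNIV] \<open>closed X\<close> by (simp add: closed_inner_approx_closed)
  next
    case (Compl B)
    have "X \<inter> (UNIV - B) = X - B" "X - (UNIV - B) = X \<inter> B" by auto
    then show ?case using Compl.IH by simp
  next
    case (Union B)
    have "B i \<in> sets borel" for i using Union.hyps by (simp add: sets_borel)
    then have "X \<inter> B i \<in> sets M" "X - B i \<in> sets M" for i
      using in_sets[of "B i"] in_sets[of "- B i"] by (auto simp: Diff_eq)
    then have "closed_inner_approx M (\<Union>i. X \<inter> B i)" "closed_inner_approx M (\<Inter>i. X - B i)"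
      using Union.IH by (intro closed_inner_approx_UN closed_inner_approx_INT \<open>finite_measure M\<close>; blast)+
    moreover have "X \<inter> (\<Union>i. B i) = (\<Union>i. X \<inter> B i)" "X - (\<Union>i. B i) = (\<Inter>i. X - B i)" by auto
    ultimately show ?case by metis
  qed
  moreover obtain B where "B \<in> sets borel" "A = X \<inter> B"
    using sets \<open>A \<in> sets M\<close> by (auto simp: sets_restrict_space)
  ultimately show ?thesis by (simp add: sets_borel)
qed

section \<open>Orbits asymptotic to a time shift of the orbit of \<open>p\<close>\<close>

locale invariant_borel_prob = prob_space M
  for M :: "'a::metric_space measure" +
  fixes X :: "'a set" and f :: "'a \<Rightarrow> 'a"
  assumes compact_X: "compact X" and maps_to: "f ` X \<subseteq> X"
    and sets_eq: "sets M = sets (restrict_space borel X)" and space_eq: "space M = X"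
    and invariant: "invariant_measure f M"
begin

lemma closed_X: "closed X"
  using compact_X by (rule compact_imp_closed)

lemma funpow_in_X: "x \<in> X \<Longrightarrow> (f ^^ n) x \<in> X"
  using maps_to by (induction n) auto

lemma measurable_funpow: "f ^^ n \<in> M \<rightarrow>\<^sub>M M"
proof (induction n)
  case (Suc n)
  have "f \<in> M \<rightarrow>\<^sub>M M" using invariant by (simp add: invariant_measure_def)
  with Suc show ?case by (simp add: measurable_comp[of f M M "f ^^ n"] comp_def)
qed simp

lemma measurable_dist_funpow: "(\<lambda>x. dist ((f ^^ n) x) c) \<in> borel_measurable M"
proof -
  have "(\<lambda>x. x) \<in> restrict_space borel X \<rightarrow>\<^sub>M borel"
    by (intro measurable_restrict_space1) simp
  then have "(\<lambda>x. x) \<in> M \<rightarrow>\<^sub>M borel"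
    using measurable_cong_sets[OF sets_eq, of borel borel] by metis
  moreover have "(\<lambda>y. dist y c) \<in> borel_measurable borel"
    by (intro borel_measurable_continuous_onI continuous_intros)
  ultimately have "(\<lambda>y. dist y c) \<in> borel_measurable M"
    using measurable_comp by fastforce
  from measurable_comp[OF measurable_funpow this] show ?thesis by (simp add: comp_def)
qed

lemma measure_funpow_vimage:
  assumes "A \<in> sets M"
  shows "measure M ((f ^^ n) -` A \<inter> X) = measure M A"
proof (induction n)
  case 0
  then show ?case using sets.sets_into_space[OF assms] space_eq by (simp add: Int_absorb2)
next
  case (Suc n)
  have "(f ^^ n) -` A \<inter> X \<in> sets M"
    using measurable_sets[OF measurable_funpow assms] space_eq by simp
  then have "emeasure M (f -` ((f ^^ n) -` A \<inter> X) \<inter> space M) = emeasure M ((f ^^ n) -` A \<inter> X)"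
    using invariant unfolding invariant_measure_def by blast
  then have "measure M (f -` ((f ^^ n) -` A \<inter> X) \<inter> X) = measure M ((f ^^ n) -` A \<inter> X)"
    using space_eq by (simp add: measure_def)
  moreover have "(f ^^ Suc n) -` A \<inter> X = f -` ((f ^^ n) -` A \<inter> X) \<inter> X"
    using maps_to by (auto simp: funpow_Suc_right simp del: funpow.simps)
  ultimately show ?case using Suc.IH by (simp only:)
qed

text \<open>Markov's inequality for the number of visits to \<open>D\<close> up to time \<open>T\<close>, whose mean is
  \<open>T \<mu>(D)\<close> by invariance.\<close>
lemma measure_frequent_visits_le:
  fixes T :: nat and \<eta> :: real
  assumes D: "D \<in> sets M" and "\<eta> > 0" "T > 0"
  defines "V \<equiv> {x\<in>X. \<eta> * T < card {i\<in>{..<T}. (f ^^ i) x \<in> D}}"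
  shows "V \<in> sets M" and "measure M V \<le> measure M D / \<eta>"
proof -
  define S where "S i = (f ^^ i) -` D \<inter> X" for i
  have S: "S i \<in> sets M" for i unfolding S_def using measurable_sets[OF measurable_funpow D] space_eq by simp
  define u where "u x = (\<Sum>i<T. indicator (S i) x :: real)" for x
  have u_eq: "u x = card {i\<in>{..<T}. (f ^^ i) x \<in> D}" if "x \<in> X" for x
    using that by (simp add: u_def S_def indicator_def Int_def)
  have int: "integrable M u"
    unfolding u_def using S
    by (intro Bochner_Integration.integrable_sum integrable_real_indicator) (auto simp: emeasure_eq_measure)
  have "(\<integral>x. u x \<partial>M) = (\<Sum>i<T. measure M (S i \<inter> space M))"
    unfolding u_def using S by (subst Bochner_Integration.integral_sum) (auto simp: emeasure_eq_measure)
  also have "\<dots> = (\<Sum>i<T. measure M (S i))" using space_eq by (simp add: S_def Int_assoc)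
  also have "\<dots> = T * measure M D" unfolding S_def using measure_funpow_vimage[OF D] by simp
  finally have int_u: "(\<integral>x. u x \<partial>M) = T * measure M D" .
  have V_eq: "V = {x\<in>space M. \<eta> * T < u x}" using u_eq space_eq by (auto simp: V_def)
  have u: "u \<in> borel_measurable M" using int by (rule borel_measurable_integrable)
  have "V = u -` {\<eta> * T<..} \<inter> space M" using V_eq by auto
  also have "\<dots> \<in> sets M" using u by (rule measurable_sets) simp
  finally show "V \<in> sets M" .
  have "measure M V \<le> measure M {x\<in>space M. \<eta> * T \<le> u x}"
    unfolding V_eq using u by (intro finite_measure_mono) auto
  also have "\<dots> \<le> (\<integral>x. u x \<partial>M) / (\<eta> * T)"
    using \<open>\<eta> > 0\<close> \<open>T > 0\<close> by (intro integral_Markov_inequality_measure[OF int sets.top])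
      (auto simp: u_def intro!: AE_I2 sum_nonneg)
  also have "\<dots> = measure M D / \<eta>" using int_u \<open>T > 0\<close> by simp
  finally show "measure M V \<le> measure M D / \<eta>" .
qed

definition asymptotic_set :: "'a \<Rightarrow> nat \<Rightarrow> nat \<Rightarrow> 'a set" where
  "asymptotic_set p k m = {x\<in>X. (\<lambda>n. dist ((f ^^ (n + k)) x) ((f ^^ (n + m)) p)) \<longlonglongrightarrow> 0}"

definition orbit_asymptotic_set :: "'a \<Rightarrow> 'a set" where
  "orbit_asymptotic_set p = (\<Union>k. \<Union>m. asymptotic_set p k m)"

lemma stable_set_eq_asymptotic_set: "stable_set X f p = asymptotic_set p 0 0"
  by (simp add: stable_set_def asymptotic_set_def)

lemma asymptotic_set_sets: "asymptotic_set p k m \<in> sets M"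
proof -
  have "Measurable.pred M (\<lambda>x. (\<lambda>n. dist ((f ^^ (n + k)) x) ((f ^^ (n + m)) p)) \<longlonglongrightarrow> 0)"
    by (intro measurable_limit measurable_dist_funpow)
  then show ?thesis by (simp add: pred_def asymptotic_set_def space_eq)
qed

lemma orbit_asymptotic_set_sets: "orbit_asymptotic_set p \<in> sets M"
proof -
  have "(\<Union>m. asymptotic_set p k m) \<in> sets M" for k
    using asymptotic_set_sets by (intro sets.countable_UN') auto
  then show ?thesis unfolding orbit_asymptotic_set_def by (intro sets.countable_UN') auto
qed

lemma asymptotic_set_Suc_Suc: "asymptotic_set p k m \<subseteq> asymptotic_set p (Suc k) (Suc m)"
  unfolding asymptotic_set_def by (auto dest: LIMSEQ_Suc)

lemma image_in_asymptotic_set_iff: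
  "x \<in> X \<Longrightarrow> f x \<in> asymptotic_set p k m \<longleftrightarrow> x \<in> asymptotic_set p (Suc k) m"
  using maps_to by (auto simp: asymptotic_set_def funpow_Suc_right simp del: funpow.simps)

lemma vimage_orbit_asymptotic_set: "f -` orbit_asymptotic_set p \<inter> X = orbit_asymptotic_set p"
proof (intro equalityI subsetI)
  fix x assume "x \<in> f -` orbit_asymptotic_set p \<inter> X"
  then show "x \<in> orbit_asymptotic_set p"
    unfolding orbit_asymptotic_set_def using image_in_asymptotic_set_iff by blast
next
  fix x assume "x \<in> orbit_asymptotic_set p"
  then obtain k m where "x \<in> asymptotic_set p k m" by (auto simp: orbit_asymptotic_set_def)
  then have "x \<in> asymptotic_set p (Suc k) (Suc m)" using asymptotic_set_Suc_Suc by blast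
  moreover have "x \<in> X" using \<open>x \<in> asymptotic_set p k m\<close> by (simp add: asymptotic_set_def)
  ultimately show "x \<in> f -` orbit_asymptotic_set p \<inter> X"
    by (auto simp: orbit_asymptotic_set_def image_in_asymptotic_set_iff[symmetric])
qed

lemma measure_orbit_asymptotic_set:
  assumes "ergodic_measure f M" and "measure M (stable_set X f p) > 0"
  shows "measure M (orbit_asymptotic_set p) = 1"
proof -
  have "stable_set X f p \<subseteq> orbit_asymptotic_set p"
    by (auto simp: stable_set_eq_asymptotic_set orbit_asymptotic_set_def)
  then have "measure M (orbit_asymptotic_set p) > 0"
    using assms(2) finite_measure_mono[OF _ orbit_asymptotic_set_sets] by (meson less_le_trans)
  moreover have "measure M (orbit_asymptotic_set p) = 0 \<or> measure M (orbit_asymptotic_set p) = 1"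
    using assms(1) orbit_asymptotic_set_sets vimage_orbit_asymptotic_set space_eq
    by (simp add: ergodic_measure_def)
  ultimately show ?thesis by linarith
qed

definition shadowing_set :: "'a \<Rightarrow> real \<Rightarrow> nat \<Rightarrow> 'a set" where
  "shadowing_set p \<delta> N = (\<Union>k\<le>N. \<Union>m\<le>N.
     {x\<in>X. \<forall>n\<ge>N. dist ((f ^^ (n + k)) x) ((f ^^ (n + m)) p) < \<delta>})"

lemma sets_dist_funpow_less: "{x\<in>X. dist ((f ^^ n) x) c < r} \<in> sets M"
proof -
  have "{x\<in>X. dist ((f ^^ n) x) c < r} = (\<lambda>x. dist ((f ^^ n) x) c) -` {..<r} \<inter> space M"
    using space_eq by auto
  also have "\<dots> \<in> sets M" by (rule measurable_sets[OF measurable_dist_funpow]) simp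
  finally show ?thesis .
qed

lemma shadowing_set_sets: "shadowing_set p \<delta> N \<in> sets M"
proof -
  have INT_from: "(\<And>n. A n \<in> sets M) \<Longrightarrow> (\<Inter>n\<in>{N..}. A n) \<in> sets M" for A
    by (rule sets.countable_INT') auto
  have "{x\<in>X. \<forall>n\<ge>N. dist ((f ^^ (n + k)) x) ((f ^^ (n + m)) p) < \<delta>} \<in> sets M" for k m
  proof -
    have "{x\<in>X. \<forall>n\<ge>N. dist ((f ^^ (n + k)) x) ((f ^^ (n + m)) p) < \<delta>} =
      (\<Inter>n\<in>{N..}. {x\<in>X. dist ((f ^^ (n + k)) x) ((f ^^ (n + m)) p) < \<delta>}) \<inter> X"
      by auto
    also have "\<dots> \<in> sets M"
      using space_eq sets.top by (intro sets.Int INT_from sets_dist_funpow_less) auto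
    finally show ?thesis .
  qed
  then show ?thesis unfolding shadowing_set_def
    by (intro sets.finite_UN[OF finite_atMost])
qed

lemma exists_shadowing_set:
  assumes "ergodic_measure f M" and "measure M (stable_set X f p) > 0" and "\<delta> > 0" "e > 0"
  obtains N where "measure M (X - shadowing_set p \<delta> N) < e"
proof -
  have "shadowing_set p \<delta> N \<subseteq> shadowing_set p \<delta> N'" if "N \<le> N'" for N N'
  proof
    fix x assume "x \<in> shadowing_set p \<delta> N"
    then obtain k m where "k \<le> N" "m \<le> N" "x \<in> X"
      and "\<forall>n\<ge>N. dist ((f ^^ (n + k)) x) ((f ^^ (n + m)) p) < \<delta>"
      unfolding shadowing_set_def by blast
    then have "x \<in> {x\<in>X. \<forall>n\<ge>N'. dist ((f ^^ (n + k)) x) ((f ^^ (n + m)) p) < \<delta>}"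
      using that by auto
    then show "x \<in> shadowing_set p \<delta> N'"
      using that \<open>k \<le> N\<close> \<open>m \<le> N\<close> unfolding shadowing_set_def by (intro UN_I[of k] UN_I[of m]) auto
  qed
  then have "incseq (shadowing_set p \<delta>)" by (simp add: incseq_def)
  then have "(\<lambda>N. measure M (shadowing_set p \<delta> N)) \<longlonglongrightarrow> measure M (\<Union>N. shadowing_set p \<delta> N)"
    using shadowing_set_sets by (intro finite_Lim_measure_incseq) auto
  moreover have "orbit_asymptotic_set p \<subseteq> (\<Union>N. shadowing_set p \<delta> N)"
  proof
    fix x assume "x \<in> orbit_asymptotic_set p"
    then obtain k m where "x \<in> X"
      and lim: "(\<lambda>n. dist ((f ^^ (n + k)) x) ((f ^^ (n + m)) p)) \<longlonglongrightarrow> 0"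
      by (auto simp: orbit_asymptotic_set_def asymptotic_set_def)
    then obtain N0 where "\<forall>n\<ge>N0. dist ((f ^^ (n + k)) x) ((f ^^ (n + m)) p) < \<delta>"
      using \<open>\<delta> > 0\<close> order_tendstoD(2)[OF lim] by (auto simp: eventually_sequentially)
    then have "x \<in> {x\<in>X. \<forall>n\<ge>max N0 (max k m). dist ((f ^^ (n + k)) x) ((f ^^ (n + m)) p) < \<delta>}"
      using \<open>x \<in> X\<close> by auto
    then have "x \<in> shadowing_set p \<delta> (max N0 (max k m))"
      unfolding shadowing_set_def by (intro UN_I[of k] UN_I[of m]) auto
    then show "x \<in> (\<Union>N. shadowing_set p \<delta> N)" by blast
  qed
  then have "measure M (orbit_asymptotic_set p) \<le> measure M (\<Union>N. shadowing_set p \<delta> N)"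
    using shadowing_set_sets by (intro finite_measure_mono sets.countable_UN') auto
  then have "measure M (\<Union>N. shadowing_set p \<delta> N) > 1 - e"
    using measure_orbit_asymptotic_set[OF assms(1,2)] \<open>e > 0\<close> by simp
  ultimately have "eventually (\<lambda>N. measure M (shadowing_set p \<delta> N) > 1 - e) sequentially"
    by (rule order_tendstoD(1))
  then obtain N where "measure M (shadowing_set p \<delta> N) > 1 - e"
    by (auto simp: eventually_sequentially)
  moreover have "measure M (X - shadowing_set p \<delta> N) = 1 - measure M (shadowing_set p \<delta> N)"
    using prob_compl[OF shadowing_set_sets] space_eq by simp
  ultimately show ?thesis by (intro that[of N]) linarith
qed

end

section \<open>Itineraries and the entropy of the join\<close>

locale invariant_borel_prob_partition = invariant_borel_prob +
  fixes P :: "'a set set"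
  assumes partition: "finite_meas_partition M P"
begin

lemma finite_P: "finite P" and P_sets: "P \<subseteq> sets M" and Union_P: "\<Union>P = X"
  and disjoint_P: "A \<in> P \<Longrightarrow> B \<in> P \<Longrightarrow> A \<noteq> B \<Longrightarrow> A \<inter> B = {}"
  using partition space_eq unfolding finite_meas_partition_def by auto

definition cell_of :: "nat \<Rightarrow> 'a \<Rightarrow> 'a set" where
  "cell_of i x = (THE A. A \<in> P \<and> (f ^^ i) x \<in> A)"

lemma cell_of_eq: "A \<in> P \<Longrightarrow> (f ^^ i) x \<in> A \<Longrightarrow> cell_of i x = A"
  unfolding cell_of_def using disjoint_P by (intro the_equality) auto

lemma cell_of_in: "x \<in> X \<Longrightarrow> cell_of i x \<in> P"
proof -
  assume "x \<in> X"
  then obtain A where "A \<in> P" "(f ^^ i) x \<in> A" using funpow_in_X Union_P by blast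
  then show ?thesis using cell_of_eq by auto
qed

definition itinerary :: "nat \<Rightarrow> 'a \<Rightarrow> nat \<Rightarrow> 'a set" where
  "itinerary T x = restrict (\<lambda>i. cell_of i x) {..<T}"

lemma itinerary_in: "x \<in> X \<Longrightarrow> itinerary T x \<in> {..<T} \<rightarrow>\<^sub>E P"
  unfolding itinerary_def using cell_of_in by auto

definition join_cell :: "nat \<Rightarrow> (nat \<Rightarrow> 'a set) \<Rightarrow> 'a set" where
  "join_cell T h = X \<inter> (\<Inter>i<T. (f ^^ i) -` h i)"

lemma iter_join_eq: "iter_join M f P T = join_cell T ` ({..<T} \<rightarrow>\<^sub>E P)"
proof (intro equalityI subsetI)
  fix A assume "A \<in> iter_join M f P T"
  then obtain c where c: "\<forall>i<T. c i \<in> P" "A = join_cell T c"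
    unfolding iter_join_def join_cell_def space_eq by blast
  moreover have "join_cell T c = join_cell T (restrict c {..<T})"
    unfolding join_cell_def by auto
  moreover have "restrict c {..<T} \<in> {..<T} \<rightarrow>\<^sub>E P" using c by auto
  ultimately show "A \<in> join_cell T ` ({..<T} \<rightarrow>\<^sub>E P)" by (metis image_eqI)
next
  fix A assume "A \<in> join_cell T ` ({..<T} \<rightarrow>\<^sub>E P)"
  then obtain h where "\<forall>i<T. h i \<in> P" "A = join_cell T h" by auto
  then show "A \<in> iter_join M f P T" unfolding iter_join_def join_cell_def space_eq by blast
qed

lemma finite_iter_join: "finite (iter_join M f P T)"
  unfolding iter_join_eq using finite_P by (intro finite_imageI finite_PiE) auto

lemma card_iter_join_le: "card (iter_join M f P T) \<le> card P ^ T"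
  unfolding iter_join_eq using card_image_le[of "{..<T} \<rightarrow>\<^sub>E P" "join_cell T"] finite_P
  by (simp add: card_PiE finite_PiE)

lemma iter_join_sets: "iter_join M f P T \<subseteq> sets M"
proof
  fix A assume "A \<in> iter_join M f P T"
  then obtain h where h: "h \<in> {..<T} \<rightarrow>\<^sub>E P" "A = join_cell T h" unfolding iter_join_eq by blast
  have "A = (\<Inter>i\<in>{..<T}. (f ^^ i) -` h i \<inter> space M) \<inter> space M"
    unfolding h join_cell_def space_eq by auto
  also have "\<dots> \<in> sets M"
  proof (cases "T = 0")
    case False
    then show ?thesis using h P_sets
      by (intro sets.Int sets.finite_INT measurable_sets[OF measurable_funpow]) (auto simp: PiE_def Pi_def)
  qed simp
  finally show "A \<in> sets M" .
qed

lemma itinerary_eq_of_mem_join_cell: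
  assumes "h \<in> {..<T} \<rightarrow>\<^sub>E P" and "x \<in> join_cell T h"
  shows "itinerary T x = h"
proof
  fix i show "itinerary T x i = h i"
    using assms cell_of_eq[of "h i" i x] by (cases "i < T") (auto simp: itinerary_def join_cell_def)
qed

lemma iter_join_disjoint:
  assumes "A \<in> iter_join M f P T" "B \<in> iter_join M f P T" "A \<noteq> B"
  shows "A \<inter> B = {}"
proof (rule ccontr)
  assume "A \<inter> B \<noteq> {}"
  then obtain x where "x \<in> A" "x \<in> B" by blast
  obtain h h' where h: "h \<in> {..<T} \<rightarrow>\<^sub>E P" "A = join_cell T h"
    and h': "h' \<in> {..<T} \<rightarrow>\<^sub>E P" "B = join_cell T h'"
    using assms(1,2) unfolding iter_join_eq by blast
  have "itinerary T x = h" using itinerary_eq_of_mem_join_cell[OF h(1)] h(2) \<open>x \<in> A\<close> by simp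
  moreover have "itinerary T x = h'" using itinerary_eq_of_mem_join_cell[OF h'(1)] h'(2) \<open>x \<in> B\<close> by simp
  ultimately show False using h(2) h'(2) assms(3) by simp
qed

lemma card_iter_join_meeting_le:
  assumes "G \<subseteq> X"
  shows "card {A \<in> iter_join M f P T. A \<inter> G \<noteq> {}} \<le> card (itinerary T ` G)"
proof -
  have "itinerary T ` G \<subseteq> {..<T} \<rightarrow>\<^sub>E P" using assms itinerary_in by blast
  then have fin: "finite (itinerary T ` G)" by (rule finite_subset) (simp add: finite_PiE finite_P)
  have "{A \<in> iter_join M f P T. A \<inter> G \<noteq> {}} \<subseteq> join_cell T ` itinerary T ` G"
  proof
    fix A assume "A \<in> {A \<in> iter_join M f P T. A \<inter> G \<noteq> {}}"
    then obtain h x where "h \<in> {..<T} \<rightarrow>\<^sub>E P" "A = join_cell T h" "x \<in> A" "x \<in> G"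
      unfolding iter_join_eq by blast
    then have "A = join_cell T (itinerary T x)" using itinerary_eq_of_mem_join_cell by simp
    then show "A \<in> join_cell T ` itinerary T ` G" using \<open>x \<in> G\<close> by blast
  qed
  then have "card {A \<in> iter_join M f P T. A \<inter> G \<noteq> {}} \<le> card (join_cell T ` itinerary T ` G)"
    by (rule card_mono[OF finite_imageI[OF fin]])
  also have "\<dots> \<le> card (itinerary T ` G)" using fin by (rule card_image_le)
  finally show ?thesis .
qed

text \<open>Only cells of the join that meet a good set \<open>G\<close> contribute more than a bounded amount;
  the rest is controlled by \<open>\<mu>(X - G)\<close>.\<close>
lemma part_entropy_iter_join_le:
  assumes G: "G \<in> sets M"
  shows "part_entropy M (iter_join M f P T) \<le>
    ln (card (itinerary T ` G)) + measure M (X - G) * (T * ln (card P)) + 2"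
proof -
  have "G \<subseteq> X" using G sets.sets_into_space space_eq by auto
  have "part_entropy M (iter_join M f P T) \<le> ln (card {A \<in> iter_join M f P T. A \<inter> G \<noteq> {}}) +
      measure M (X - G) * ln (card (iter_join M f P T)) + 2"
    using part_entropy_le_ln_card_meeting[OF finite_iter_join iter_join_sets iter_join_disjoint G]
    by (simp add: space_eq)
  moreover have "ln (card {A \<in> iter_join M f P T. A \<inter> G \<noteq> {}}) \<le> ln (card (itinerary T ` G))"
    using card_iter_join_meeting_le[OF \<open>G \<subseteq> X\<close>] by (rule ln_of_nat_mono)
  moreover have "ln (card (iter_join M f P T)) \<le> T * ln (card P)"
  proof (cases "card (iter_join M f P T) = 0")
    case False
    then have "0 < card P ^ T" using card_iter_join_le by (metis gr0I le_0_eq)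
    then have "card P > 0 \<or> T = 0" by (metis gr0I power_0_left)
    moreover have "real (card (iter_join M f P T)) \<le> real (card P) ^ T"
      using card_iter_join_le by (metis of_nat_le_iff of_nat_power)
    ultimately show ?thesis using False by (auto simp: ln_realpow[symmetric])
  qed (simp add: ln_of_nat_nonneg)
  then have "measure M (X - G) * ln (card (iter_join M f P T)) \<le> measure M (X - G) * (T * ln (card P))"
    by (intro mult_left_mono) auto
  ultimately show ?thesis by linarith
qed

lemma exists_separated_cores:
  assumes "e > 0"
  shows "\<exists>\<delta> K. \<delta> > 0 \<and> (\<forall>A\<in>P. K A \<in> sets M \<and> K A \<subseteq> A) \<and>
    (\<forall>A\<in>P. \<forall>B\<in>P. A \<noteq> B \<longrightarrow> (\<forall>z\<in>K A. \<forall>w\<in>K B. 2 * \<delta> \<le> dist z w)) \<and>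
    measure M (X - (\<Union>A\<in>P. K A)) < e"
proof -
  have "closed_inner_approx M A" if "A \<in> P" for A
    using closed_inner_approx_restrict_borel[OF finite_measure sets_eq closed_X] P_sets that by auto
  moreover have e': "e / (card P + 1) > 0" using assms by simp
  ultimately have "\<forall>A\<in>P. \<exists>F. F \<in> sets M \<and> closed F \<and> F \<subseteq> A \<and> measure M (A - F) < e / (card P + 1)"
    unfolding closed_inner_approx_def by blast
  then obtain K where K: "\<And>A. A \<in> P \<Longrightarrow> K A \<in> sets M \<and> closed (K A) \<and> K A \<subseteq> A"
    and small: "\<And>A. A \<in> P \<Longrightarrow> measure M (A - K A) < e / (card P + 1)"
    by metis
  \<comment> \<open>disjoint compact cores have positive distance, and there are finitely many pairs\<close>
  have "eventually (\<lambda>\<delta>. \<forall>AB\<in>P \<times> P. fst AB \<noteq> snd AB \<longrightarrow>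
      (\<forall>z\<in>K (fst AB). \<forall>w\<in>K (snd AB). 2 * \<delta> \<le> dist z w)) (at_right 0)"
  proof (intro eventually_ball_finite ballI)
    show "finite (P \<times> P)" using finite_P by simp
    fix AB assume "AB \<in> P \<times> P"
    then obtain A B where AB: "AB = (A, B)" "A \<in> P" "B \<in> P" by blast
    show "eventually (\<lambda>\<delta>. fst AB \<noteq> snd AB \<longrightarrow>
        (\<forall>z\<in>K (fst AB). \<forall>w\<in>K (snd AB). 2 * \<delta> \<le> dist z w)) (at_right 0)"
    proof (cases "A = B")
      case False
      have "compact (K A)"
        using compact_Int_closed[OF compact_X, of "K A"] K[OF AB(2)] Union_P AB(2) by (metis Int_absorb1 Sup_upper order_trans)
      moreover have "K A \<inter> K B = {}" using K AB disjoint_P[OF AB(2,3) False] by blast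
      ultimately obtain d where "d > 0" and d: "\<And>z w. z \<in> K A \<Longrightarrow> w \<in> K B \<Longrightarrow> d \<le> dist z w"
        using K[OF AB(3)] compact_closed_separated by metis
      have "eventually (\<lambda>\<delta>. \<delta> < d / 2) (at_right 0)"
        using \<open>d > 0\<close> by (intro eventually_at_right_field[THEN iffD2]) (auto intro!: exI[of _ "d / 2"])
      then show ?thesis
      proof (rule eventually_mono)
        fix \<delta> :: real assume "\<delta> < d / 2"
        then have "2 * \<delta> \<le> dist z w" if "z \<in> K A" "w \<in> K B" for z w
          using d[OF that] by linarith
        then show "fst AB \<noteq> snd AB \<longrightarrow> (\<forall>z\<in>K (fst AB). \<forall>w\<in>K (snd AB). 2 * \<delta> \<le> dist z w)"
          using AB by simp
      qed
    qed (use AB in simp)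
  qed
  moreover have "eventually (\<lambda>\<delta>::real. \<delta> > 0) (at_right 0)"
    by (rule eventually_at_right_less)
  ultimately have "eventually (\<lambda>\<delta>. \<delta> > 0 \<and> (\<forall>AB\<in>P \<times> P. fst AB \<noteq> snd AB \<longrightarrow>
      (\<forall>z\<in>K (fst AB). \<forall>w\<in>K (snd AB). 2 * \<delta> \<le> dist z w))) (at_right 0)"
    by (simp add: eventually_conj_iff)
  then have "\<exists>\<delta>. \<delta> > 0 \<and> (\<forall>AB\<in>P \<times> P. fst AB \<noteq> snd AB \<longrightarrow>
      (\<forall>z\<in>K (fst AB). \<forall>w\<in>K (snd AB). 2 * \<delta> \<le> dist z w))"
    by (rule eventually_happens'[rotated]) simp
  then obtain \<delta> where "\<delta> > 0" and sep: "\<forall>AB\<in>P \<times> P. fst AB \<noteq> snd AB \<longrightarrow>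
      (\<forall>z\<in>K (fst AB). \<forall>w\<in>K (snd AB). 2 * \<delta> \<le> dist z w)"
    by blast
  have "(\<Union>A\<in>P. A - K A) \<in> sets M"
    using K P_sets by (intro sets.finite_UN[OF finite_P]) auto
  then have "measure M (X - (\<Union>A\<in>P. K A)) \<le> measure M (\<Union>A\<in>P. A - K A)"
    using Union_P by (intro finite_measure_mono) auto
  also have "\<dots> \<le> (\<Sum>A\<in>P. measure M (A - K A))"
    using K P_sets by (intro finite_measure_subadditive_finite[OF finite_P]) auto
  also have "\<dots> \<le> card P * (e / (card P + 1))"
    using small by (intro sum_bounded_above less_imp_le)
  also have "\<dots> < e" using assms by (simp add: field_simps)
  finally show ?thesis using \<open>\<delta> > 0\<close> K sep by auto
qed

lemma cell_of_eq_nearest_core: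
  assumes cores: "\<And>A. A \<in> P \<Longrightarrow> K A \<subseteq> A"
    and sep: "\<And>A B z w. A \<in> P \<Longrightarrow> B \<in> P \<Longrightarrow> A \<noteq> B \<Longrightarrow> z \<in> K A \<Longrightarrow> w \<in> K B \<Longrightarrow> 2 * \<delta> \<le> dist z w"
    and shadow: "\<forall>n\<ge>N. dist ((f ^^ (n + k)) x) ((f ^^ (n + m)) p) < \<delta>"
    and "N + k \<le> i" "A \<in> P" "(f ^^ i) x \<in> K A"
  shows "cell_of i x = (SOME A. A \<in> P \<and> (\<exists>z\<in>K A. dist z ((f ^^ (i - k + m)) p) < \<delta>))"
proof -
  have close: "dist ((f ^^ i) x) ((f ^^ (i - k + m)) p) < \<delta>"
    using shadow[rule_format, of "i - k"] \<open>N + k \<le> i\<close> by simp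
  have "(SOME A. A \<in> P \<and> (\<exists>z\<in>K A. dist z ((f ^^ (i - k + m)) p) < \<delta>)) = A"
    by (rule separated_cores_nearest_eq[where P=P and K=K and \<delta>=\<delta>, OF sep assms(5,6) close])
  moreover have "cell_of i x = A" using assms(5,6) cores by (intro cell_of_eq) auto
  ultimately show ?thesis by simp
qed

text \<open>The itinerary of a point that shadows \<open>p\<close> and rarely leaves the cores is read off the orbit of
  \<open>p\<close>, except at the first \<open>2N\<close> times and at the rare exceptional ones.\<close>
lemma part_entropy_iter_join_le_shadowing:
  fixes \<eta> :: real
  assumes cores: "\<And>A. A \<in> P \<Longrightarrow> K A \<subseteq> A"
    and sep: "\<And>A B z w. A \<in> P \<Longrightarrow> B \<in> P \<Longrightarrow> A \<noteq> B \<Longrightarrow> z \<in> K A \<Longrightarrow> w \<in> K B \<Longrightarrow> 2 * \<delta> \<le> dist z w"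
    and \<eta>: "0 < \<eta>" "\<eta> \<le> 1" and "P \<noteq> {}" and G: "G \<in> sets M"
    and good: "\<And>x. x \<in> G \<Longrightarrow>
      x \<in> shadowing_set p \<delta> N \<and> card {i\<in>{..<T}. (f ^^ i) x \<notin> (\<Union>A\<in>P. K A)} \<le> \<eta> * T"
  shows "part_entropy M (iter_join M f P T) \<le> 2 * ln (real N + 1) + T * \<eta> + \<eta> * T * ln (1 / \<eta>) +
    (2 * real N + \<eta> * T) * ln (card P) + measure M (X - G) * (T * ln (card P)) + 2"
proof -
  define near where "near y = (SOME A. A \<in> P \<and> (\<exists>z\<in>K A. dist z y < \<delta>))" for y
  define s where "s = (\<lambda>(k, m) i. near ((f ^^ (i - k + m)) p))"
  have pattern: "itinerary T x \<in> {..<T} \<rightarrow>\<^sub>E P \<and> (\<exists>j\<in>{..N} \<times> {..N}. \<exists>B. B \<subseteq> {..<T} \<and> card B \<le> \<eta> * T \<and>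
      (\<forall>i<T. 2 * N \<le> i \<and> i \<notin> B \<longrightarrow> itinerary T x i = s j i))" if x: "x \<in> G" for x
  proof -
    obtain k m where km: "k \<le> N" "m \<le> N" "x \<in> X"
      and shadow: "\<forall>n\<ge>N. dist ((f ^^ (n + k)) x) ((f ^^ (n + m)) p) < \<delta>"
      using good[OF x] unfolding shadowing_set_def by blast
    define B where "B = {i\<in>{..<T}. (f ^^ i) x \<notin> (\<Union>A\<in>P. K A)}"
    have "itinerary T x i = s (k, m) i" if i: "i < T" "2 * N \<le> i" "i \<notin> B" for i
    proof -
      obtain A where "A \<in> P" "(f ^^ i) x \<in> K A" using i unfolding B_def by blast
      then show ?thesis
        using i km cell_of_eq_nearest_core[OF cores sep shadow, where i=i and A=A]
        by (simp add: itinerary_def s_def near_def)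
    qed
    moreover have "card B \<le> \<eta> * T" using good[OF x] by (simp add: B_def)
    ultimately show ?thesis
      using km itinerary_in[OF \<open>x \<in> X\<close>] by (intro conjI bexI[of _ "(k, m)"] exI[of _ B]) (auto simp: B_def)
  qed
  have "ln (card (itinerary T ` G)) \<le>
      ln (card ({..N} \<times> {..N})) + T * \<eta> + \<eta> * T * ln (1 / \<eta>) + (2 * real N + \<eta> * T) * ln (card P)"
    using ln_card_patterns_le[OF finite_P \<open>P \<noteq> {}\<close> _ _ \<eta> pattern] by simp
  also have "ln (card ({..N} \<times> {..N})) = 2 * ln (real N + 1)"
  proof -
    have "real (card ({..N} \<times> {..N})) = (real N + 1) * (real N + 1)"
      by (simp add: card_cartesian_product algebra_simps)
    then show ?thesis by (simp add: ln_mult)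
  qed
  finally have "ln (card (itinerary T ` G)) \<le>
      2 * ln (real N + 1) + T * \<eta> + \<eta> * T * ln (1 / \<eta>) + (2 * real N + \<eta> * T) * ln (card P)" .
  then show ?thesis using part_entropy_iter_join_le[OF G, of T] by linarith
qed

lemma eventually_part_entropy_iter_join_less:
  assumes erg: "ergodic_measure f M" and pos: "measure M (stable_set X f p) > 0"
    and "P \<noteq> {}" and \<epsilon>: "\<epsilon> > 0"
  shows "eventually (\<lambda>T. part_entropy M (iter_join M f P T) / T < \<epsilon>) sequentially"
proof -
  define c where "c = ln (card P)"
  have "c \<ge> 0" unfolding c_def by (rule ln_of_nat_nonneg)
  obtain \<eta> where \<eta>: "0 < \<eta>" "\<eta> \<le> 1" "\<eta> * (1 + ln (1 / \<eta>) + c) < \<epsilon> / 4"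
    using exists_small_eta[of "\<epsilon> / 4" c] \<epsilon> by auto
  define \<epsilon>' where "\<epsilon>' = \<epsilon> / (8 * (c + 1))"
  have "\<epsilon>' > 0" using \<epsilon> \<open>c \<ge> 0\<close> by (simp add: \<epsilon>'_def)
  then have "\<eta> * \<epsilon>' > 0" using \<eta> by simp
  obtain \<delta> K where "\<delta> > 0" and K: "\<forall>A\<in>P. K A \<in> sets M \<and> K A \<subseteq> A"
    and sep: "\<forall>A\<in>P. \<forall>B\<in>P. A \<noteq> B \<longrightarrow> (\<forall>z\<in>K A. \<forall>w\<in>K B. 2 * \<delta> \<le> dist z w)"
    and D_small: "measure M (X - (\<Union>A\<in>P. K A)) < \<eta> * \<epsilon>'"
    using exists_separated_cores[OF \<open>\<eta> * \<epsilon>' > 0\<close>] by auto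
  define D where "D = X - (\<Union>A\<in>P. K A)"
  have "(\<Union>A\<in>P. K A) \<in> sets M" using K by (intro sets.finite_UN[OF finite_P]) auto
  then have D: "D \<in> sets M" unfolding D_def using space_eq by auto
  obtain N where N: "measure M (X - shadowing_set p \<delta> N) < \<epsilon>'"
    by (rule exists_shadowing_set[OF erg pos \<open>\<delta> > 0\<close> \<open>\<epsilon>' > 0\<close>])
  define C where "C = 2 * ln (real N + 1) + 2 * real N * c + 2"
  have "C \<ge> 0" using \<open>c \<ge> 0\<close> by (simp add: C_def)
  have "part_entropy M (iter_join M f P T) / T < \<epsilon>" if T: "nat \<lceil>4 * C / \<epsilon>\<rceil> + 1 \<le> T" for T
  proof -
    from T have "T > 0" by simp
    define V where "V = {x\<in>X. \<eta> * T < card {i\<in>{..<T}. (f ^^ i) x \<in> D}}"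
    have V: "V \<in> sets M" "measure M V \<le> measure M D / \<eta>"
      unfolding V_def by (rule measure_frequent_visits_le[OF D \<eta>(1) \<open>T > 0\<close>])+
    define G where "G = shadowing_set p \<delta> N - V"
    have G: "G \<in> sets M" unfolding G_def using V(1) shadowing_set_sets by (rule sets.Diff[rotated])
    have good: "x \<in> shadowing_set p \<delta> N \<and> card {i\<in>{..<T}. (f ^^ i) x \<notin> (\<Union>A\<in>P. K A)} \<le> \<eta> * T"
      if x: "x \<in> G" for x
    proof -
      have "shadowing_set p \<delta> N \<subseteq> X" unfolding shadowing_set_def by auto
      then have "x \<in> X" "x \<in> shadowing_set p \<delta> N" "x \<notin> V" using x by (auto simp: G_def)
      moreover have "{i\<in>{..<T}. (f ^^ i) x \<notin> (\<Union>A\<in>P. K A)} = {i\<in>{..<T}. (f ^^ i) x \<in> D}"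
        using funpow_in_X[OF \<open>x \<in> X\<close>] by (auto simp: D_def)
      ultimately show ?thesis by (simp add: V_def not_less)
    qed
    have "measure M (X - G) \<le> measure M ((X - shadowing_set p \<delta> N) \<union> V)"
      using V shadowing_set_sets space_eq by (intro finite_measure_mono) (auto simp: G_def)
    also have "\<dots> \<le> measure M (X - shadowing_set p \<delta> N) + measure M V"
      using V shadowing_set_sets space_eq by (intro measure_Un_le) auto
    also have "measure M V < \<epsilon>'"
    proof -
      have "measure M D < \<eta> * \<epsilon>'" using D_small by (simp add: D_def)
      then have "measure M D / \<eta> < \<epsilon>'" using \<eta>(1) by (simp add: divide_less_eq mult.commute)
      then show ?thesis using V(2) by linarith
    qed
    finally have "measure M (X - G) < 2 * \<epsilon>'" using N by simp
    then have err: "measure M (X - G) * (T * c) \<le> T * (2 * \<epsilon>' * c)"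
      using mult_right_mono[of "measure M (X - G)" "2 * \<epsilon>'" "T * c"] \<open>c \<ge> 0\<close> by (simp add: mult_ac)
    have cores: "\<And>A. A \<in> P \<Longrightarrow> K A \<subseteq> A" using K by blast
    have "part_entropy M (iter_join M f P T) \<le> 2 * ln (real N + 1) + T * \<eta> + \<eta> * T * ln (1 / \<eta>) +
        (2 * real N + \<eta> * T) * c + measure M (X - G) * (T * c) + 2"
      using part_entropy_iter_join_le_shadowing[OF cores sep[rule_format] \<eta>(1,2) \<open>P \<noteq> {}\<close> G good]
      unfolding c_def .
    moreover have "2 * ln (real N + 1) + T * \<eta> + \<eta> * T * ln (1 / \<eta>) + (2 * real N + \<eta> * T) * c + 2
        = C + T * (\<eta> * (1 + ln (1 / \<eta>) + c))"
      unfolding C_def by (simp add: algebra_simps)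
    ultimately have "part_entropy M (iter_join M f P T) \<le> C + T * (\<eta> * (1 + ln (1 / \<eta>) + c)) + T * (2 * \<epsilon>' * c)"
      using err by linarith
    then have "part_entropy M (iter_join M f P T) / T \<le> (C + T * (\<eta> * (1 + ln (1 / \<eta>) + c)) + T * (2 * \<epsilon>' * c)) / T"
      using \<open>T > 0\<close> by (intro divide_right_mono) auto
    also have "\<dots> = C / T + \<eta> * (1 + ln (1 / \<eta>) + c) + 2 * \<epsilon>' * c"
      using \<open>T > 0\<close> by (simp add: add_divide_distrib)
    also have "C / T \<le> \<epsilon> / 4"
    proof -
      have "4 * C / \<epsilon> \<le> real (nat \<lceil>4 * C / \<epsilon>\<rceil>)" by (rule real_nat_ceiling_ge)
      then have "4 * C / \<epsilon> \<le> T" using T by linarith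
      then show ?thesis using \<open>T > 0\<close> \<epsilon> by (simp add: divide_le_eq field_simps)
    qed
    also have "2 * \<epsilon>' * c \<le> \<epsilon> / 4"
      using \<epsilon> \<open>c \<ge> 0\<close> by (simp add: \<epsilon>'_def field_simps)
    finally have "part_entropy M (iter_join M f P T) / T \<le> \<epsilon> / 4 + \<eta> * (1 + ln (1 / \<eta>) + c) + \<epsilon> / 4"
      by simp
    then show ?thesis using \<eta>(3) \<epsilon> by linarith
  qed
  then show ?thesis unfolding eventually_sequentially by blast
qed

lemma entropy_part_eq_0:
  assumes "ergodic_measure f M" and "measure M (stable_set X f p) > 0" and "P \<noteq> {}"
  shows "entropy_part M f P = 0"
proof -
  have "(\<lambda>T. part_entropy M (iter_join M f P T) / T) \<longlonglongrightarrow> 0"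
  proof (rule order_tendstoI)
    fix a :: real assume "a < 0"
    have "0 \<le> part_entropy M (iter_join M f P T) / T" for T
      using part_entropy_nonneg by simp
    then show "eventually (\<lambda>T. a < part_entropy M (iter_join M f P T) / T) sequentially"
      using \<open>a < 0\<close> by (auto intro!: always_eventually less_le_trans[of a 0])
  qed (rule eventually_part_entropy_iter_join_less[OF assms])
  then show ?thesis unfolding entropy_part_def by (rule limI)
qed

end

lemma exists_partition_entropy_pos:
  assumes "metric_entropy M f > 0"
  shows "\<exists>P. finite_meas_partition M P \<and> entropy_part M f P > 0"
  using assms unfolding metric_entropy_def less_SUP_iff by auto

theorem theorem4p4:
  fixes X :: "'a::metric_space set" and f :: "'a \<Rightarrow> 'a" and M :: "'a measure"
  assumes "compact X"
    and "continuous_on X f" and "f ` X \<subseteq> X"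
    and "prob_space M"
    and "sets M = sets (restrict_space borel X)" and "space M = X"
    and "ergodic_measure f M"
    and "metric_entropy M f > 0"
    and "p \<in> X"
  shows "stable_set X f p \<in> sets M \<and> emeasure M (stable_set X f p) = 0"
proof -
  have "invariant_borel_prob M X f"
    using assms unfolding invariant_borel_prob_def invariant_borel_prob_axioms_def ergodic_measure_def
    by auto
  then interpret invariant_borel_prob M X f .
  obtain P where "finite_meas_partition M P" and "entropy_part M f P > 0"
    using exists_partition_entropy_pos[OF assms(8)] by blast
  then have "invariant_borel_prob_partition M X f P"
    unfolding invariant_borel_prob_partition_def invariant_borel_prob_partition_axioms_def
    using \<open>invariant_borel_prob M X f\<close> by simp
  then interpret invariant_borel_prob_partition M X f P .
  have "P \<noteq> {}" using Union_P \<open>p \<in> X\<close> by auto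
  then have "\<not> measure M (stable_set X f p) > 0"
    using entropy_part_eq_0[OF assms(7)] \<open>entropy_part M f P > 0\<close> by force
  then have "measure M (stable_set X f p) = 0" by (simp add: zero_less_measure_iff)
  then show ?thesis
    by (simp add: stable_set_eq_asymptotic_set asymptotic_set_sets emeasure_eq_measure)
qed

end
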